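(* Let $f\in\mathbb{Z}[X]$ be a polynomial which is not a square in $\mathbb{C}[X]$. Then there exists a finite set $P_f$ of prime numbers such that for every finite set $P$ of prime numbers there are infinitely many $x\in\mathbb{Z}$ with (a) $p\nmid f(x)$ for every $p\in P\setminus P_f$, and (b) $v_p(f(x))\equiv1\pmod 2$ for some prime $p\notin P$.
   Context: $v_p$ denotes the $p$-adic valuation on $\mathbb{Q}^\times$. *)

theory Defs
  imports "HOL-Computational_Algebra.Computational_Algebra" Complex_Main
begin

end

theory Submission
  imports Defs "HOL-Number_Theory.Cong"
begin

text \<open>
  If f is not a square in \<open>\<complex>[X]\<close>, some nonconstant prime h of \<open>\<int>[X]\<close> divides f to an odd
  power k, say \<open>f = h\<^sup>k u\<close> with h not dividing u. Bezout identities in \<open>\<rat>[X]\<close>, with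
  denominators cleared, put nonzero integers \<open>c\<^sub>1\<close>, \<open>c\<^sub>2\<close> into the ideals \<open>(h, u)\<close> and
  \<open>(h, h')\<close> of \<open>\<int>[X]\<close>. By Schur's theorem some value \<open>h(x\<^sub>0)\<close> has a prime divisor q
  outside P and prime to \<open>c\<^sub>1 c\<^sub>2\<close>; then q divides neither \<open>u(x\<^sub>0)\<close> nor \<open>h'(x\<^sub>0)\<close>, so q
  divides h exactly once at \<open>x\<^sub>0\<close> or at \<open>x\<^sub>0 + q\<close>, and then \<open>v\<^sub>q(f(x)) = k\<close> on a whole
  residue class modulo \<open>q\<^sup>2\<close>. With \<open>P\<^sub>f\<close> the primes dividing one nonzero value \<open>f(a)\<close>, the
  Chinese remainder theorem intersects this class with \<open>x \<equiv> a\<close> modulo the primes of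
  \<open>P - P\<^sub>f\<close>, which then divide no \<open>f(x)\<close>.
\<close>

lemma poly_diff_dvd:
  fixes p :: "'a::comm_ring_1 poly"
  shows "x - y dvd poly p x - poly p y"
proof (induction p)
  case (pCons a p)
  have "poly (pCons a p) x - poly (pCons a p) y = x * (poly p x - poly p y) + (x - y) * poly p y"
    by (simp add: algebra_simps)
  with pCons.IH show ?case by simp
qed simp

lemma poly_cong:
  fixes p :: "'a::unique_euclidean_ring poly"
  assumes "[x = y] (mod m)"
  shows "[poly p x = poly p y] (mod m)"
  using assms dvd_trans[OF _ poly_diff_dvd] by (simp add: cong_iff_dvd_diff)

lemma finite_poly_preimage:
  fixes p :: "'a::idom poly"
  assumes "degree p > 0" "finite A"
  shows "finite {x. poly p x \<in> A}"
proof -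
  have preimage: "{x. poly p x \<in> A} = (\<Union>a\<in>A. {x. poly (p - [:a:]) x = 0})" by auto
  have "finite {x. poly (p - [:a:]) x = 0}" for a
    using assms(1) by (intro poly_roots_finite) (metis degree_pCons_0 neq0_conv right_minus_eq)
  then show ?thesis unfolding preimage by (intro finite_UN_I[OF assms(2)])
qed

lemma poly_shift_dvd_square:
  fixes p :: "'a::idom poly"
  shows "q\<^sup>2 dvd poly p (x + q) - poly p x - q * poly (pderiv p) x"
proof (induction p)
  case (pCons a p)
  have "poly (pCons a p) (x + q) - poly (pCons a p) x - q * poly (pderiv (pCons a p)) x
     = x * (poly p (x + q) - poly p x - q * poly (pderiv p) x) + q * (poly p (x + q) - poly p x)"
    by (simp add: pderiv_pCons algebra_simps)
  moreover have "q\<^sup>2 dvd q * (poly p (x + q) - poly p x)"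
    using poly_diff_dvd[of "x + q" x p] by (simp add: power2_eq_square)
  ultimately show ?case
    using pCons.IH by (metis dvd_add dvd_mult)
qed simp

lemma exact_dvd_near_simple_root:
  fixes p :: "'a::idom poly"
  assumes "q \<noteq> 0" "q dvd poly p x" "\<not> q dvd poly (pderiv p) x"
  shows "\<exists>y\<in>{x, x + q}. q dvd poly p y \<and> \<not> q\<^sup>2 dvd poly p y"
proof (cases "q\<^sup>2 dvd poly p x")
  case True
  have "q dvd poly p (x + q) - poly p x"
    using poly_diff_dvd[of "x + q" x p] by simp
  from dvd_add[OF this assms(2)] have "q dvd poly p (x + q)"
    by simp
  moreover have "\<not> q\<^sup>2 dvd poly p (x + q)"
  proof
    assume "q\<^sup>2 dvd poly p (x + q)"
    then have "q\<^sup>2 dvd poly p (x + q) - (poly p (x + q) - poly p x - q * poly (pderiv p) x) - poly p x"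
      by (rule dvd_diff[OF dvd_diff[OF _ poly_shift_dvd_square] True])
    then have "q * q dvd q * poly (pderiv p) x"
      by (simp add: power2_eq_square)
    with assms(1,3) show False by simp
  qed
  ultimately show ?thesis by blast
qed (use assms(2) in auto)

lemma multiplicity_power_mult_of_exact_dvd:
  assumes "prime_elem q" "q dvd a" "\<not> q\<^sup>2 dvd a" "\<not> q dvd b"
  shows "multiplicity q (a ^ k * b) = k"
proof -
  have "a \<noteq> 0" using assms(3) by auto
  have "multiplicity q a = 1"
    using assms(2,3) by (intro multiplicity_eqI) (auto simp: power2_eq_square)
  then have "multiplicity q (a ^ k) = k"
    using prime_elem_multiplicity_power_distrib[OF assms(1) \<open>a \<noteq> 0\<close>] by simp
  then show ?thesis
    using multiplicity_prime_elem_times_other[OF assms(1,4), of "a ^ k"] by (metis mult.commute)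
qed

lemma even_multiplicities_imp_unit_times_square:
  fixes x :: "'a::factorial_semiring"
  assumes "x \<noteq> 0" "\<And>p. p \<in> prime_factors x \<Longrightarrow> even (multiplicity p x)"
  obtains u g where "is_unit u" "x = u * g\<^sup>2"
proof -
  have "prod_mset (prime_factorization x) = (\<Prod>p\<in>prime_factors x. p ^ multiplicity p x)"
    unfolding prod_mset_multiplicity
    by (intro prod.cong) (simp_all add: count_prime_factorization_prime in_prime_factors_imp_prime)
  also have "\<dots> = (\<Prod>p\<in>prime_factors x. (p ^ (multiplicity p x div 2))\<^sup>2)"
    using assms(2) by (intro prod.cong) (auto simp: power_mult[symmetric] elim!: evenE)
  also have "\<dots> = (\<Prod>p\<in>prime_factors x. p ^ (multiplicity p x div 2))\<^sup>2"
    by (simp add: prod_power_distrib)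
  finally have "normalize x = normalize ((\<Prod>p\<in>prime_factors x. p ^ (multiplicity p x div 2))\<^sup>2)"
    using prod_mset_prime_factorization_weak[OF assms(1)] by simp
  then show ?thesis by (elim associatedE1) (rule that)
qed

lemma euclidean_common_divisor_combination:
  fixes a b :: "'a::euclidean_ring"
  shows "\<exists>s t. s * a + t * b dvd a \<and> s * a + t * b dvd b"
proof (induction b arbitrary: a rule: measure_induct_rule[where f = euclidean_size])
  case (less b)
  show ?case
  proof (cases "b = 0")
    case True
    then show ?thesis by (intro exI[of _ 1] exI[of _ 0]) simp
  next
    case False
    then obtain s t where st: "s * b + t * (a mod b) dvd b" "s * b + t * (a mod b) dvd a mod b"
      using less mod_size_less by blast
    have "t * a = t * (a div b) * b + t * (a mod b)"
      by (metis div_mult_mod_eq distrib_left mult.assoc)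
    then have comb: "s * b + t * (a mod b) = t * a + (s - t * (a div b)) * b"
      by (simp add: algebra_simps)
    have "s * b + t * (a mod b) dvd a"
      using dvd_add[OF dvd_mult[OF st(1), of "a div b"] st(2)] by simp
    with st(1) show ?thesis unfolding comb by blast
  qed
qed

lemma irreducible_bezout:
  fixes a b :: "'a::euclidean_ring"
  assumes "irreducible a" "\<not> a dvd b"
  shows "\<exists>s t. s * a + t * b = 1"
proof -
  obtain s t where st: "s * a + t * b dvd a" "s * a + t * b dvd b"
    using euclidean_common_divisor_combination by blast
  then obtain k where k: "a = (s * a + t * b) * k" by blast
  have "is_unit (s * a + t * b)"
  proof (rule ccontr)
    assume "\<not> is_unit (s * a + t * b)"
    then have "is_unit k" using irreducibleD[OF assms(1) k] by blast
    then have "a dvd s * a + t * b" using k by (metis dvd_mult_unit_iff dvd_refl)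
    with st(2) assms(2) show False by (blast intro: dvd_trans)
  qed
  then obtain w where "1 = (s * a + t * b) * w" by blast
  then have "(s * w) * a + (t * w) * b = 1" by (simp add: algebra_simps)
  then show ?thesis by blast
qed

lemma fract_poly_clear_denominators:
  fixes S :: "'a::{factorial_ring_gcd,semiring_gcd_mult_normalize} fract poly"
  obtains d s where "d \<noteq> 0" "fract_poly s = smult (to_fract d) S"
proof -
  obtain n d where nd: "fract_content S = Fract n d" "d \<noteq> 0" by (cases "fract_content S")
  have S: "S = smult (Fract n d) (fract_poly (primitive_part_fract S))"
    using content_times_primitive_part_fract[of S] nd by simp
  have "to_fract d * Fract n d = to_fract n"
    using nd(2) by (simp add: Fract_conv_to_fract)
  then have "fract_poly (smult n (primitive_part_fract S)) = smult (to_fract d) S"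
    by (subst S) simp
  with nd(2) show ?thesis by (rule that)
qed

lemma int_poly_bezout_const:
  fixes a b :: "int poly"
  assumes "prime a" "degree a > 0" "\<not> a dvd b"
  obtains c s t where "c \<noteq> 0" "s * a + t * b = [:c:]"
proof -
  have irr: "irreducible (fract_poly a)" and "content a = 1"
    using assms(1,2) nonconst_poly_irreducible_iff[of a] by (auto intro: prime_elem_imp_irreducible)
  then have "\<not> fract_poly a dvd fract_poly b" using assms(3) fract_poly_dvdD by blast
  then obtain S T where ST: "S * fract_poly a + T * fract_poly b = 1"
    using irreducible_bezout[OF irr] by blast
  obtain d1 s where s: "d1 \<noteq> 0" "fract_poly s = smult (to_fract d1) S"
    by (rule fract_poly_clear_denominators)
  obtain d2 t where t: "d2 \<noteq> 0" "fract_poly t = smult (to_fract d2) T"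
    by (rule fract_poly_clear_denominators)
  have "fract_poly (smult d2 s * a + smult d1 t * b)
      = smult (to_fract d1 * to_fract d2) (S * fract_poly a + T * fract_poly b)"
    using s t by (simp add: smult_add_right mult.commute)
  also have "\<dots> = fract_poly [:d1 * d2:]" using ST by (simp add: map_poly_pCons)
  finally have "smult d2 s * a + smult d1 t * b = [:d1 * d2:]" by (simp only: fract_poly_eq_iff)
  with s(1) t(1) show ?thesis by (intro that[of "d1 * d2" "smult d2 s" "smult d1 t"]) simp_all
qed

lemma bezout_value_not_dvd:
  fixes a b s t :: "'a::comm_ring_1 poly"
  assumes "s * a + t * b = [:c:]" "q dvd poly a x" "\<not> q dvd c"
  shows "\<not> q dvd poly b x"
proof
  assume "q dvd poly b x"
  with assms(2) have "q dvd poly s x * poly a x + poly t x * poly b x" by simp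
  also have "poly s x * poly a x + poly t x * poly b x = c"
    using arg_cong[OF assms(1), of "\<lambda>p. poly p x"] by simp
  finally show False using assms(3) by contradiction
qed

lemma schur_prime_divisor:
  fixes h :: "int poly" and N :: int
  assumes "degree h > 0" "N \<noteq> 0"
  obtains q x where "prime q" "q dvd poly h x" "\<not> q dvd N"
proof (cases "poly h 0 = 0")
  case True
  obtain q :: nat where q: "prime q" "nat \<bar>N\<bar> < q" using bigger_prime by blast
  have "\<not> int q dvd N" using dvd_imp_le_int[OF assms(2), of "int q"] q(2) by auto
  with q(1) True show ?thesis by (intro that[of "int q" 0]) simp_all
next
  case False
  obtain a g where h: "h = pCons a g" by (cases h)
  with assms(1) False have "a \<noteq> 0" "g \<noteq> 0" by auto
  \<comment> \<open>The values of h on multiples of a N are a times values \<open>1 + Q t \<equiv> 1 (mod N)\<close>.\<close>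
  define Q where "Q = smult N ([:0, 1:] * pcompose g [:0, a * N:])"
  have h_at_multiple: "poly h (a * N * t) = a * (1 + poly Q t)" for t
    by (simp add: h Q_def poly_pcompose algebra_simps)
  have "pcompose g [:0, a * N:] \<noteq> 0"
    using \<open>a \<noteq> 0\<close> \<open>g \<noteq> 0\<close> assms(2) pcompose_eq_0[of g "[:0, a * N:]"] by auto
  then have "degree Q > 0"
    using assms(2) by (simp add: Q_def degree_mult_eq)
  then have "finite {t. poly Q t \<in> {-2, -1, 0}}" by (rule finite_poly_preimage) simp
  then obtain t where "t \<notin> {t. poly Q t \<in> {-2, -1, 0}}"
    using ex_new_if_finite[OF infinite_UNIV_int] by blast
  then have "1 + poly Q t \<noteq> 0" "\<not> is_unit (1 + poly Q t)" by auto
  then obtain q where q: "prime q" "q dvd 1 + poly Q t" using prime_divisor_exists by blast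
  have "\<not> q dvd N"
  proof
    assume "q dvd N"
    then have "q dvd poly Q t" by (simp add: Q_def)
    with q(2) have "q dvd 1" by (simp only: dvd_add_left_iff)
    with q(1) show False using not_prime_unit by blast
  qed
  with q show ?thesis by (intro that[of q "a * N * t"]) (simp_all add: h_at_multiple)
qed

lemma prime_dvd_primitive_imp_nonconstant:
  fixes h p :: "int poly"
  assumes "content p = 1" "prime h" "h dvd p"
  shows "degree h > 0"
proof (rule ccontr)
  assume "\<not> degree h > 0"
  then obtain d where d: "h = [:d:]" by (auto elim: degree_eq_zeroE)
  with assms(1,3) have "is_unit d"
    by (simp add: const_poly_dvd_iff_dvd_content)
  then have "is_unit h" unfolding d by (simp only: is_unit_const_poly_iff)
  with assms(2) show False by (simp add: not_prime_unit)
qed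

lemma int_poly_eq_smult_square:
  fixes f :: "int poly"
  assumes "f \<noteq> 0" "\<And>h. prime h \<Longrightarrow> degree h > 0 \<Longrightarrow> even (multiplicity h f)"
  obtains c g where "f = smult c (g\<^sup>2)"
proof -
  define c where "c = content f"
  define p where "p = primitive_part f"
  have f_eq: "f = [:c:] * p" and "c \<noteq> 0" "p \<noteq> 0" "content p = 1"
    using assms(1) by (simp_all add: c_def p_def)
  have even_p: "even (multiplicity h p)" if "h \<in> prime_factors p" for h
  proof -
    from that have "prime h" "h dvd p" by auto
    with \<open>content p = 1\<close> have "degree h > 0" by (rule prime_dvd_primitive_imp_nonconstant)
    have "\<not> h dvd [:c:]"
    proof
      assume "h dvd [:c:]"
      then have "degree h \<le> degree [:c:]" using \<open>c \<noteq> 0\<close> by (intro dvd_imp_degree_le) simp_all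
      with \<open>degree h > 0\<close> show False by simp
    qed
    with \<open>prime h\<close> have "multiplicity h f = multiplicity h p"
      unfolding f_eq by (intro multiplicity_prime_elem_times_other) simp_all
    with assms(2)[OF \<open>prime h\<close> \<open>degree h > 0\<close>] show ?thesis by simp
  qed
  obtain u g where "is_unit u" "p = u * g\<^sup>2"
    using even_multiplicities_imp_unit_times_square[OF \<open>p \<noteq> 0\<close> even_p] .
  moreover from \<open>is_unit u\<close> obtain e where "u = [:e:]" by (auto simp: is_unit_poly_iff)
  ultimately have "p = [:e:] * g\<^sup>2" by simp
  with f_eq show ?thesis by (intro that) (simp add: mult.assoc)
qed

lemma map_poly_of_int_mult:
  "map_poly (of_int :: int \<Rightarrow> 'a::comm_ring_1) (p * q) = map_poly of_int p * map_poly of_int q"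
  by (rule poly_eqI) (simp add: coeff_map_poly coeff_mult)

lemma map_poly_of_int_smult_square:
  fixes c :: int and g :: "int poly"
  shows "map_poly (of_int :: int \<Rightarrow> complex) (smult c (g\<^sup>2))
       = (smult (csqrt (of_int c)) (map_poly of_int g))\<^sup>2"
proof -
  have "map_poly (of_int :: int \<Rightarrow> complex) (smult c (g\<^sup>2))
      = smult ((csqrt (of_int c))\<^sup>2) ((map_poly of_int g)\<^sup>2)"
    using power2_csqrt[of "of_int c"] by (simp add: map_poly_smult power2_eq_square map_poly_of_int_mult)
  then show ?thesis by (simp only: smult_power)
qed

lemma not_complex_square_imp_odd_multiplicity:
  fixes f :: "int poly"
  assumes "\<nexists>g :: complex poly. map_poly of_int f = g\<^sup>2"
  shows "\<exists>h. prime h \<and> degree h > 0 \<and> odd (multiplicity h f)"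
proof (rule ccontr)
  assume "\<not> ?thesis"
  then have even: "even (multiplicity h f)" if "prime h" "degree h > 0" for h
    using that by blast
  have "f \<noteq> 0"
    using assms by (metis map_poly_0 zero_power2)
  then obtain c g where "f = smult c (g\<^sup>2)"
    using int_poly_eq_smult_square even by blast
  with assms map_poly_of_int_smult_square show False by blast
qed

lemma exists_prime_exactly_dividing_value:
  fixes h u :: "int poly" and N :: int
  assumes "prime h" "degree h > 0" "\<not> h dvd u" "N \<noteq> 0"
  obtains q x where "prime q" "\<not> q dvd N" "q dvd poly h x" "\<not> q\<^sup>2 dvd poly h x" "\<not> q dvd poly u x"
proof -
  have "\<not> h dvd pderiv h"
  proof
    assume "h dvd pderiv h"
    moreover have "pderiv h \<noteq> 0" using assms(2) by (simp add: pderiv_eq_0_iff)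
    ultimately have "degree h \<le> degree (pderiv h)" by (rule dvd_imp_degree_le)
    with assms(2) show False by (simp add: degree_pderiv)
  qed
  obtain c1 s1 t1 where c1: "c1 \<noteq> 0" "s1 * h + t1 * u = [:c1:]"
    using int_poly_bezout_const[OF assms(1-3)] .
  obtain c2 s2 t2 where c2: "c2 \<noteq> 0" "s2 * h + t2 * pderiv h = [:c2:]"
    using int_poly_bezout_const[OF assms(1,2) \<open>\<not> h dvd pderiv h\<close>] .
  obtain q x0 where q: "prime q" "q dvd poly h x0" "\<not> q dvd N * c1 * c2"
    using schur_prime_divisor[OF assms(2), of "N * c1 * c2"] assms(4) c1(1) c2(1) by auto
  then have "\<not> q dvd N" "\<not> q dvd c1" "\<not> q dvd c2" by auto
  have "\<not> q dvd poly u x0"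
    using bezout_value_not_dvd[OF c1(2) q(2) \<open>\<not> q dvd c1\<close>] .
  have "\<not> q dvd poly (pderiv h) x0"
    using bezout_value_not_dvd[OF c2(2) q(2) \<open>\<not> q dvd c2\<close>] .
  with q(1,2) obtain x where x: "x \<in> {x0, x0 + q}" "q dvd poly h x" "\<not> q\<^sup>2 dvd poly h x"
    using exact_dvd_near_simple_root[of q h x0] by auto
  from x(1) have "[poly u x = poly u x0] (mod q)"
    by (intro poly_cong) (auto simp: cong_iff_dvd_diff)
  with \<open>\<not> q dvd poly u x0\<close> have "\<not> q dvd poly u x"
    using cong_dvd_iff by blast
  with q(1) \<open>\<not> q dvd N\<close> x(2,3) show ?thesis by (rule that)
qed

lemma multiplicity_poly_power_mult_cong:
  fixes h u :: "int poly"
  assumes "prime q" "[x = y] (mod q\<^sup>2)"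
    and "q dvd poly h y" "\<not> q\<^sup>2 dvd poly h y" "\<not> q dvd poly u y"
  shows "poly (h ^ k * u) x \<noteq> 0" "multiplicity q (poly (h ^ k * u) x) = k"
proof -
  have "[x = y] (mod q)" using assms(2) by (rule cong_dvd_modulus) simp
  then have "[poly h x = poly h y] (mod q)" "[poly u x = poly u y] (mod q)"
    by (simp_all add: poly_cong)
  moreover have "[poly h x = poly h y] (mod q\<^sup>2)" using assms(2) by (rule poly_cong)
  ultimately have h: "q dvd poly h x" "\<not> q\<^sup>2 dvd poly h x" and u: "\<not> q dvd poly u x"
    using assms(3-5) cong_dvd_iff by blast+
  then show "poly (h ^ k * u) x \<noteq> 0" by auto
  show "multiplicity q (poly (h ^ k * u) x) = k"
    using multiplicity_power_mult_of_exact_dvd[OF prime_imp_prime_elem[OF assms(1)] h u] by simp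
qed

lemma infinite_cong_class_int:
  fixes m a :: int
  assumes "m \<noteq> 0"
  shows "infinite {x. [x = a] (mod m)}"
proof -
  have "inj (\<lambda>t. a + m * t)" using assms by (simp add: inj_def)
  then have "infinite (range (\<lambda>t. a + m * t))" using infinite_UNIV_int finite_imageD by blast
  moreover have "range (\<lambda>t. a + m * t) \<subseteq> {x. [x = a] (mod m)}"
    by (auto simp: cong_iff_dvd_diff)
  ultimately show ?thesis using infinite_super by blast
qed

lemma infinite_values_with_new_prime_of_multiplicity:
  fixes f h u :: "int poly" and P :: "int set"
  assumes f: "f = h ^ k * u" and h: "prime h" "degree h > 0" "\<not> h dvd u"
    and P: "finite P" "\<forall>p\<in>P. prime p"
  shows "infinite {x. (\<forall>p\<in>P. \<not> p dvd poly f x0 \<longrightarrow> \<not> p dvd poly f x) \<and>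
           (\<exists>q. prime q \<and> q \<notin> P \<and> poly f x \<noteq> 0 \<and> multiplicity q (poly f x) = k)}"
    (is "infinite {x. ?good x}")
proof -
  define M where "M = \<Prod>{p\<in>P. \<not> p dvd poly f x0}"
  have "\<Prod>P \<noteq> 0" "M \<noteq> 0"
    using P by (auto simp: M_def prod_zero_iff)
  then obtain q x1 where q: "prime q" "\<not> q dvd \<Prod>P"
    and x1: "q dvd poly h x1" "\<not> q\<^sup>2 dvd poly h x1" "\<not> q dvd poly u x1"
    using exists_prime_exactly_dividing_value[OF h] by metis
  have "q \<notin> P" using q(2) P(1) by (auto intro: dvd_prodI)
  with P q(1) have "coprime M (q\<^sup>2)"
    unfolding M_def by (intro prod_coprime_left) (auto intro!: primes_coprime)
  then obtain x2 where x2: "[x2 = x0] (mod M)" "[x2 = x1] (mod q\<^sup>2)"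
    using binary_chinese_remainder_int by blast
  have "{x. [x = x2] (mod M * q\<^sup>2)} \<subseteq> {x. ?good x}"
  proof (intro subsetI, unfold mem_Collect_eq)
    fix x assume x: "[x = x2] (mod M * q\<^sup>2)"
    have "[x = x0] (mod M)"
      using cong_modulus_mult[OF x] x2(1) by (rule cong_trans)
    have "[x = x1] (mod q\<^sup>2)"
      using cong_modulus_mult[of x x2 "q\<^sup>2" M] x x2(2) by (simp add: mult.commute cong_trans)
    have "\<not> p dvd poly f x" if "p \<in> P" "\<not> p dvd poly f x0" for p
    proof -
      have "p dvd M" unfolding M_def using P(1) that by (auto intro: dvd_prodI)
      with \<open>[x = x0] (mod M)\<close> have "[poly f x = poly f x0] (mod p)"
        by (intro poly_cong) (rule cong_dvd_modulus)
      with that(2) show ?thesis using cong_dvd_iff by blast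
    qed
    with q(1) \<open>q \<notin> P\<close> show "?good x"
      unfolding f using multiplicity_poly_power_mult_cong[OF q(1) \<open>[x = x1] (mod q\<^sup>2)\<close> x1] by blast
  qed
  moreover have "infinite {x. [x = x2] (mod M * q\<^sup>2)}"
    using \<open>M \<noteq> 0\<close> q(1) by (intro infinite_cong_class_int) auto
  ultimately show ?thesis by (rule infinite_super)
qed

theorem lemma5p2:
  fixes f :: "int poly"
  assumes not_square: "\<not> (\<exists>g :: complex poly. map_poly of_int f = g ^ 2)"
  shows "\<exists>Pf :: int set. finite Pf \<and> (\<forall>p\<in>Pf. prime p) \<and>
    (\<forall>P :: int set. finite P \<and> (\<forall>p\<in>P. prime p) \<longrightarrow>
      infinite {x :: int.
         (\<forall>p \<in> P - Pf. \<not> p dvd poly f x) \<and>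
         (\<exists>p. prime p \<and> p \<notin> P \<and> poly f x \<noteq> 0 \<and> odd (multiplicity p (poly f x)))})"
proof -
  obtain h where h: "prime h" "degree h > 0" "odd (multiplicity h f)"
    using not_complex_square_imp_odd_multiplicity[OF not_square] by blast
  then have "f \<noteq> 0" "\<not> is_unit h" by (auto simp: prime_def)
  then obtain u where u: "f = h ^ multiplicity h f * u" "\<not> h dvd u"
    by (rule multiplicity_decompose')
  obtain x0 where "poly f x0 \<noteq> 0"
    using poly_roots_finite[OF \<open>f \<noteq> 0\<close>] ex_new_if_finite[OF infinite_UNIV_int] by blast
  define Pf where "Pf = {p. prime p \<and> p dvd poly f x0}"
  have "finite Pf"
    using finite_divisors_int[OF \<open>poly f x0 \<noteq> 0\<close>] by (rule finite_subset[rotated]) (auto simp: Pf_def)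
  moreover have "infinite {x.
         (\<forall>p \<in> P - Pf. \<not> p dvd poly f x) \<and>
         (\<exists>p. prime p \<and> p \<notin> P \<and> poly f x \<noteq> 0 \<and> odd (multiplicity p (poly f x)))}"
    if "finite P" "\<forall>p\<in>P. prime p" for P
  proof (rule infinite_super)
    show "infinite {x. (\<forall>p\<in>P. \<not> p dvd poly f x0 \<longrightarrow> \<not> p dvd poly f x) \<and>
      (\<exists>q. prime q \<and> q \<notin> P \<and> poly f x \<noteq> 0 \<and> multiplicity q (poly f x) = multiplicity h f)}"
      by (rule infinite_values_with_new_prime_of_multiplicity[OF u(1) h(1,2) u(2) that])
  qed (use h(3) that(2) in \<open>auto simp: Pf_def\<close>)
  ultimately show ?thesis unfolding Pf_def by blast
qed

end
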